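(* Let $\rho$ be $\mathfrak L$-regular. For every $s\in(0,1)$, $t>0$, integer $K>1$, $E\in\mathbb R$, and every $u\in\mathcal X$ with $u\ge0$ and $\int_{\mathbb R}u(x)\,dx>0$, there exists $c=c(s,t,u,E,K)>0$ such that for all $x\in\mathbb R$, $$(F^2u)(x)\ge\frac{c}{1+|x|^{2-s}},$$ where $F=F_{K,t,s,E}$.
   Context: A probability density $p:\mathbb R\to[0,\infty)$ is $\mathfrak L$-regular ($\mathfrak L>0$) if: (i) $p(x)\le\mathfrak L(1+x^2)^{-1}$ for all $x$; (ii) $p(x)\ge\mathfrak L^{-1}$ for all $x\in[-\mathfrak L^{-1},\mathfrak L^{-1}]$; (iii) $p'$ exists everywhere and $|p'(x)|\le\mathfrak L(1+|x|)^{-1-1/\mathfrak L}$ for all $x$; (iv) for every $v>0$, $\inf_{|x|<v}p(x)>0$; (v) $p'(x)=0$ for only finitely many $x$. $V_0$ denotes a random variable with density $\rho$. Self-energy densities: for $E\in\mathbb R$, $p_E$ is the density of a fixed (arbitrarily chosen) real-valued solution $\Gamma$ of the distributional equation $\Gamma\overset{d}{=}\big(V_0-E-t^2\sum_{i=1}^K\Gamma_i\big)^{-1}$, where $\Gamma_1,\dots,\Gamma_K$ are i.i.d. copies of $\Gamma$ independent of $V_0$. $\rho_E$ denotes the density of $V_0-E-t^2\sum_{i=1}^{K-1}\Gamma_i$, where $\Gamma_i$ are i.i.d. with density $p_E$ and independent of $V_0$. Transfer operator: for $s\in(0,1)$, $F=F_{K,t,s,E}$ acts on functions $u:\mathbb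 R\to\mathbb R$ by $(Fu)(x)=\frac{t^{2-s}}{|x|^{2-s}}\int_{\mathbb R}\rho_E\big(-y-\tfrac{t^2}{x}\big)u(y)\,dy$. $\mathcal X$ is the Banach space of functions $f:\mathbb R\to\mathbb R$ with $\|f\|=\sup_x|f(x)|(1+|x|^{2-s})<\infty$. *)

theory Defs
  imports "HOL-Probability.Probability"
begin

definition prob_density :: "(real \<Rightarrow> real) \<Rightarrow> bool" where
  "prob_density p \<longleftrightarrow> (\<forall>x. 0 \<le> p x) \<and> p \<in> borel_measurable borel
     \<and> (\<integral>\<^sup>+ x. ennreal (p x) \<partial>lborel) = 1"

definition L_regular :: "real \<Rightarrow> (real \<Rightarrow> real) \<Rightarrow> bool" where
  "L_regular L p \<longleftrightarrow> 0 < L \<and> prob_density p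
     \<and> (\<forall>x. p x \<le> L / (1 + x^2))
     \<and> (\<forall>x. -(1/L) \<le> x \<and> x \<le> 1/L \<longrightarrow> 1/L \<le> p x)
     \<and> (\<forall>x. p differentiable (at x))
     \<and> (\<forall>x. \<bar>deriv p x\<bar> \<le> L * (1 + \<bar>x\<bar>) powr (-1 - 1/L))
     \<and> (\<forall>v>0. (INF x\<in>{x. \<bar>x\<bar> < v}. p x) > 0)
     \<and> finite {x. deriv p x = 0}"

text \<open>p is the density of a real solution Gamma of
  Gamma =d (V0 - E - t^2 sum_{i<K} Gamma_i)^{-1}, V0 with density rho,
  Gamma_i iid copies of Gamma independent of V0.\<close>
definition self_energy_density ::
  "(real \<Rightarrow> real) \<Rightarrow> nat \<Rightarrow> real \<Rightarrow> real \<Rightarrow> (real \<Rightarrow> real) \<Rightarrow> bool" where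
  "self_energy_density rho K t E p \<longleftrightarrow> prob_density p \<and>
     distr (density lborel rho \<Otimes>\<^sub>M PiM {..<K} (\<lambda>_. density lborel p)) borel
       (\<lambda>(v, g). 1 / (v - E - t^2 * (\<Sum>i<K. g i))) = density lborel p"

definition rhoE_density ::
  "(real \<Rightarrow> real) \<Rightarrow> nat \<Rightarrow> real \<Rightarrow> real \<Rightarrow> (real \<Rightarrow> real) \<Rightarrow> (real \<Rightarrow> real) \<Rightarrow> bool" where
  "rhoE_density rho K t E p rhoE \<longleftrightarrow> prob_density rhoE \<and>
     distr (density lborel rho \<Otimes>\<^sub>M PiM {..<K - 1} (\<lambda>_. density lborel p)) borel
       (\<lambda>(v, g). v - E - t^2 * (\<Sum>i<K - 1. g i)) = density lborel rhoE"

text \<open>Transfer operator F (dependence on K, E enters through rhoE).\<close>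
definition transfer :: "real \<Rightarrow> real \<Rightarrow> (real \<Rightarrow> real) \<Rightarrow> (real \<Rightarrow> real) \<Rightarrow> real \<Rightarrow> real" where
  "transfer t s rhoE u x =
     t powr (2 - s) / \<bar>x\<bar> powr (2 - s) * (\<integral> y. rhoE (- y - t^2 / x) * u y \<partial>lborel)"

definition in_X :: "real \<Rightarrow> (real \<Rightarrow> real) \<Rightarrow> bool" where
  "in_X s f \<longleftrightarrow> bdd_above (range (\<lambda>x. \<bar>f x\<bar> * (1 + \<bar>x\<bar> powr (2 - s))))"

end

theory Submission
  imports Defs
begin

text \<open>Write \<open>q = 2 - s\<close>. The transfer operator is \<open>(F f)(x) = (t/\<bar>x\<bar>)\<^sup>q (\<rho>\<^sub>E \<star> f)(t\<^sup>2/x)\<close>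
  for a convolution-type integral \<open>\<rho>\<^sub>E \<star> f\<close>. Since \<open>\<rho>\<^sub>E\<close> averages translates of \<open>\<rho>\<close>, it
  inherits the upper bound of \<open>\<rho>\<close> and its positive lower bound on every bounded interval. For a
  bounded integrable \<open>u \<ge> 0\<close> with positive mass, \<open>\<rho>\<^sub>E \<star> u\<close> is therefore bounded, integrable
  and bounded below near \<open>0\<close>, so for \<open>\<bar>y\<bar> \<ge> 1\<close> the function \<open>F u\<close> is bounded and at least \<open>d \<bar>y\<bar>\<^sup>-\<^sup>q\<close>,
  and the substitution \<open>b = t\<^sup>2/y\<close> shows that \<open>F u\<close> is integrable near \<open>0\<close>. Convolving this
  once more, the tail of \<open>F u\<close> gives \<open>(\<rho>\<^sub>E \<star> F u)(a) \<ge> d' (\<bar>a\<bar> + 2)\<^sup>-\<^sup>q\<close>, and with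
  \<open>a = t\<^sup>2/x\<close> this yields \<open>(F\<^sup>2 u)(x) \<ge> t\<^sup>q d' (t\<^sup>2 + 2\<bar>x\<bar>)\<^sup>-\<^sup>q \<ge> c (1 + \<bar>x\<bar>\<^sup>q)\<^sup>-\<^sup>1\<close>.\<close>

lemma prob_density_prob_space:
  assumes "prob_density p" shows "prob_space (density lborel p)"
  using assms unfolding prob_density_def
  by (intro prob_spaceI) (auto simp: emeasure_density)

lemma prob_density_measurable:
  assumes "prob_density p" shows "p \<in> borel_measurable borel"
  using assms unfolding prob_density_def by auto

lemma L_regular_prob_density: "L_regular L rho \<Longrightarrow> prob_density rho"
  unfolding L_regular_def by auto

lemma L_regular_le:
  assumes "L_regular L rho" shows "rho x \<le> L"
proof -
  have "0 < L" "rho x \<le> L / (1 + x^2)" using assms unfolding L_regular_def by auto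
  moreover have "L / (1 + x^2) \<le> L" using \<open>0 < L\<close> by (simp add: divide_le_eq add_pos_nonneg)
  ultimately show ?thesis by linarith
qed

lemma L_regular_locally_bounded_below:
  assumes "L_regular L rho" and "0 < v"
  shows "\<exists>m>0. \<forall>x. \<bar>x\<bar> < v \<longrightarrow> m \<le> rho x"
proof -
  let ?m = "INF x\<in>{x. \<bar>x\<bar> < v}. rho x"
  have "?m > 0" using assms unfolding L_regular_def by auto
  moreover have "bdd_below (rho ` {x. \<bar>x\<bar> < v})"
    using assms unfolding L_regular_def prob_density_def by (auto intro: bdd_belowI[where m=0])
  then have "\<forall>x. \<bar>x\<bar> < v \<longrightarrow> ?m \<le> rho x"
    by (auto intro: cINF_lower)
  ultimately show ?thesis by blast
qed

lemma nn_integral_rhoE_disintegration: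
  fixes h :: "real \<Rightarrow> ennreal"
  assumes rE: "rhoE_density rho K t E p rhoE" and pr: "prob_density rho" and pp: "prob_density p"
    and hm[measurable]: "h \<in> borel_measurable borel"
  shows "(\<integral>\<^sup>+w. h w * ennreal (rhoE w) \<partial>lborel) =
    (\<integral>\<^sup>+g. (\<integral>\<^sup>+w. h w * ennreal (rho (w + (E + t^2 * (\<Sum>i<K-1. g i)))) \<partial>lborel)
        \<partial>PiM {..<K-1} (\<lambda>_. density lborel p))"
proof -
  let ?Q = "PiM {..<K-1} (\<lambda>_. density lborel p)"
  let ?R = "density lborel rho"
  let ?S = "\<lambda>(v, g). v - E - t^2 * (\<Sum>i<K - 1. g i)"
  interpret Q: prob_space ?Q by (intro prob_space_PiM prob_density_prob_space[OF pp])
  interpret R: prob_space ?R by (rule prob_density_prob_space[OF pr])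
  interpret RQ: pair_sigma_finite ?R ?Q ..
  have [measurable]: "rho \<in> borel_measurable borel" "rhoE \<in> borel_measurable borel" "p \<in> borel_measurable borel"
    using pr pp rE unfolding rhoE_density_def prob_density_def by auto
  have meas: "?S \<in> measurable (?R \<Otimes>\<^sub>M ?Q) borel"
    by measurable
  have "(\<integral>\<^sup>+w. h w * ennreal (rhoE w) \<partial>lborel) = (\<integral>\<^sup>+w. h w \<partial>density lborel rhoE)"
    by (subst nn_integral_density) (auto simp: mult.commute)
  also have "\<dots> = (\<integral>\<^sup>+w. h w \<partial>distr (?R \<Otimes>\<^sub>M ?Q) borel ?S)"
    using rE unfolding rhoE_density_def by simp
  also have "\<dots> = (\<integral>\<^sup>+z. h (?S z) \<partial>(?R \<Otimes>\<^sub>M ?Q))"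
    by (rule nn_integral_distr[OF meas]) simp
  also have "\<dots> = (\<integral>\<^sup>+g. (\<integral>\<^sup>+v. h (v - E - t^2 * (\<Sum>i<K - 1. g i)) \<partial>?R) \<partial>?Q)"
    by (subst RQ.nn_integral_snd[symmetric]) (auto simp: case_prod_beta)
  also have "\<dots> = (\<integral>\<^sup>+g. (\<integral>\<^sup>+w. h w * ennreal (rho (w + (E + t^2 * (\<Sum>i<K-1. g i)))) \<partial>lborel) \<partial>?Q)"
  proof (rule nn_integral_cong)
    fix g
    let ?c = "E + t^2 * (\<Sum>i<K-1. g i)"
    have "(\<integral>\<^sup>+v. h (v - E - t^2 * (\<Sum>i<K - 1. g i)) \<partial>?R) = (\<integral>\<^sup>+v. ennreal (rho v) * h (v - ?c) \<partial>lborel)"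
      by (subst nn_integral_density) (auto simp: algebra_simps)
    also have "\<dots> = (\<integral>\<^sup>+w. ennreal (rho (?c + 1 * w)) * h (?c + 1 * w - ?c) \<partial>lborel)"
      by (subst nn_integral_real_affine[where c=1 and t="?c"]) auto
    finally show "(\<integral>\<^sup>+v. h (v - E - t^2 * (\<Sum>i<K - 1. g i)) \<partial>?R) = (\<integral>\<^sup>+w. h w * ennreal (rho (w + ?c)) \<partial>lborel)"
      by (simp add: algebra_simps)
  qed
  finally show ?thesis .
qed

lemma nn_integral_rhoE_le:
  fixes h :: "real \<Rightarrow> ennreal"
  assumes rE: "rhoE_density rho K t E p rhoE" and pr: "prob_density rho" and pp: "prob_density p"
    and rho_le: "\<And>x. rho x \<le> L" and hm[measurable]: "h \<in> borel_measurable borel"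
  shows "(\<integral>\<^sup>+w. h w * ennreal (rhoE w) \<partial>lborel) \<le> ennreal L * (\<integral>\<^sup>+w. h w \<partial>lborel)"
proof -
  let ?Q = "PiM {..<K-1} (\<lambda>_. density lborel p)"
  interpret Q: prob_space ?Q by (intro prob_space_PiM prob_density_prob_space[OF pp])
  have "(\<integral>\<^sup>+w. h w * ennreal (rhoE w) \<partial>lborel) =
    (\<integral>\<^sup>+g. (\<integral>\<^sup>+w. h w * ennreal (rho (w + (E + t^2 * (\<Sum>i<K-1. g i)))) \<partial>lborel) \<partial>?Q)"
    by (rule nn_integral_rhoE_disintegration[OF rE pr pp hm])
  also have "\<dots> \<le> (\<integral>\<^sup>+g. (\<integral>\<^sup>+w. h w * ennreal L \<partial>lborel) \<partial>?Q)"
    by (intro nn_integral_mono mult_left_mono ennreal_leI rho_le) auto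
  also have "\<dots> = ennreal L * (\<integral>\<^sup>+w. h w \<partial>lborel)"
    unfolding nn_integral_const Q.emeasure_space_1 by (simp add: nn_integral_cmult mult.commute)
  finally show ?thesis .
qed

lemma (in prob_space) bounded_event_nonzero:
  assumes [measurable]: "X \<in> borel_measurable M"
  obtains n :: nat where "emeasure M {x \<in> space M. \<bar>X x\<bar> \<le> real n} \<noteq> 0"
proof -
  let ?S = "\<lambda>n::nat. {x \<in> space M. \<bar>X x\<bar> \<le> real n}"
  have "\<exists>n. emeasure M (?S n) \<noteq> 0"
  proof (rule ccontr)
    assume "\<not> ?thesis"
    then have "emeasure M (\<Union>n. ?S n) = 0"
      by (intro emeasure_UN_eq_0) auto
    moreover have "(\<Union>n. ?S n) = space M"
      using real_arch_simple by auto
    ultimately show False using emeasure_space_1 by simp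
  qed
  then show ?thesis using that by blast
qed

lemma nn_integral_translate_ge:
  fixes h :: "real \<Rightarrow> ennreal"
  assumes [measurable]: "h \<in> borel_measurable borel" and h_zero: "\<And>w. R < \<bar>w\<bar> \<Longrightarrow> h w = 0"
    and rho_ge: "\<And>x. \<bar>x\<bar> < R + T + 1 \<Longrightarrow> m \<le> rho x" and c: "\<bar>c\<bar> \<le> T"
  shows "ennreal m * (\<integral>\<^sup>+w. h w \<partial>lborel) \<le> (\<integral>\<^sup>+w. h w * ennreal (rho (w + c)) \<partial>lborel)"
proof -
  have "h w * ennreal m \<le> h w * ennreal (rho (w + c))" for w
  proof (cases "\<bar>w\<bar> \<le> R")
    case True
    with c have "\<bar>w + c\<bar> < R + T + 1" by auto
    then show ?thesis by (intro mult_left_mono ennreal_leI rho_ge) auto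
  qed (use h_zero in auto)
  then have "(\<integral>\<^sup>+w. h w * ennreal m \<partial>lborel) \<le> (\<integral>\<^sup>+w. h w * ennreal (rho (w + c)) \<partial>lborel)"
    by (intro nn_integral_mono)
  then show ?thesis by (simp add: nn_integral_cmult mult.commute)
qed

text \<open>The sum of the self-energies lies in a bounded interval with positive probability, and
  for such sums \<open>rho\<close> is bounded below on the shifted support of \<open>h\<close>.\<close>
lemma nn_integral_rhoE_ge:
  assumes rE: "rhoE_density rho K t E p rhoE" and pr: "prob_density rho" and pp: "prob_density p"
    and rho_ge: "\<And>v. 0 < v \<Longrightarrow> \<exists>m>0. \<forall>x. \<bar>x\<bar> < v \<longrightarrow> m \<le> rho x" and R: "0 < R"
  shows "\<exists>\<delta>>0. \<forall>h::real \<Rightarrow> ennreal. h \<in> borel_measurable borel \<longrightarrow> (\<forall>w. R < \<bar>w\<bar> \<longrightarrow> h w = 0) \<longrightarrow>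
     ennreal \<delta> * (\<integral>\<^sup>+w. h w \<partial>lborel) \<le> (\<integral>\<^sup>+w. h w * ennreal (rhoE w) \<partial>lborel)"
proof -
  let ?Q = "PiM {..<K-1} (\<lambda>_. density lborel p)"
  interpret Q: prob_space ?Q by (intro prob_space_PiM prob_density_prob_space[OF pp])
  have [measurable]: "p \<in> borel_measurable borel" using pp by (rule prob_density_measurable)
  let ?c = "\<lambda>g. E + t^2 * (\<Sum>i<K-1. g i)"
  have "?c \<in> borel_measurable ?Q" by measurable
  then obtain n where n: "emeasure ?Q {g \<in> space ?Q. \<bar>?c g\<bar> \<le> real n} \<noteq> 0"
    by (rule Q.bounded_event_nonzero)
  define S where "S = {g \<in> space ?Q. \<bar>?c g\<bar> \<le> real n}"
  have S_sets: "S \<in> sets ?Q" unfolding S_def by measurable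
  obtain m where m: "m > 0" and m_le: "\<And>x. \<bar>x\<bar> < R + real n + 1 \<Longrightarrow> m \<le> rho x"
    using rho_ge[of "R + real n + 1"] R by auto
  define \<delta> where "\<delta> = m * measure ?Q S"
  have "measure ?Q S > 0"
    using n Q.emeasure_eq_measure by (simp add: S_def zero_less_measure_iff)
  then have "\<delta> > 0" using m by (simp add: \<delta>_def)
  moreover have "ennreal \<delta> * (\<integral>\<^sup>+w. h w \<partial>lborel) \<le> (\<integral>\<^sup>+w. h w * ennreal (rhoE w) \<partial>lborel)"
    if hm[measurable]: "h \<in> borel_measurable borel" and hz: "\<forall>w. R < \<bar>w\<bar> \<longrightarrow> h w = 0" for h
  proof -
    have "ennreal \<delta> * (\<integral>\<^sup>+w. h w \<partial>lborel) = (\<integral>\<^sup>+g. (ennreal m * (\<integral>\<^sup>+w. h w \<partial>lborel)) * indicator S g \<partial>?Q)"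
      using m unfolding nn_integral_cmult_indicator[OF S_sets] \<delta>_def Q.emeasure_eq_measure
      by (simp add: ennreal_mult mult_ac)
    also have "\<dots> \<le> (\<integral>\<^sup>+g. (\<integral>\<^sup>+w. h w * ennreal (rho (w + ?c g)) \<partial>lborel) \<partial>?Q)"
    proof (intro nn_integral_mono)
      fix g
      show "(ennreal m * (\<integral>\<^sup>+w. h w \<partial>lborel)) * indicator S g
          \<le> (\<integral>\<^sup>+w. h w * ennreal (rho (w + ?c g)) \<partial>lborel)"
      proof (cases "g \<in> S")
        case True
        then have "\<bar>?c g\<bar> \<le> real n" by (simp add: S_def)
        from nn_integral_translate_ge[OF hm hz[rule_format] m_le this] True show ?thesis by simp
      qed simp
    qed
    also have "\<dots> = (\<integral>\<^sup>+w. h w * ennreal (rhoE w) \<partial>lborel)"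
      by (rule nn_integral_rhoE_disintegration[OF rE pr pp hm, symmetric])
    finally show ?thesis .
  qed
  ultimately show ?thesis by blast
qed

text \<open>The bounds \<open>r \<le> L\<close>, and \<open>r \<ge> \<delta>\<^sub>R\<close> on \<open>[-R, R]\<close>, in integrated (almost-everywhere) form.\<close>
locale regular_kernel =
  fixes r :: "real \<Rightarrow> real" and L :: real
  assumes density: "prob_density r"
    and nn_integral_le: "\<And>h. h \<in> borel_measurable borel \<Longrightarrow>
      (\<integral>\<^sup>+w. h w * ennreal (r w) \<partial>lborel) \<le> ennreal L * (\<integral>\<^sup>+w. h w \<partial>lborel)"
    and nn_integral_ge: "\<And>R. 0 < R \<Longrightarrow> \<exists>\<delta>>0. \<forall>h::real \<Rightarrow> ennreal. h \<in> borel_measurable borel \<longrightarrow>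
      (\<forall>w. R < \<bar>w\<bar> \<longrightarrow> h w = 0) \<longrightarrow>
      ennreal \<delta> * (\<integral>\<^sup>+w. h w \<partial>lborel) \<le> (\<integral>\<^sup>+w. h w * ennreal (r w) \<partial>lborel)"

lemma regular_kernel_rhoE:
  assumes Lr: "L_regular L rho" and sed: "self_energy_density rho K t E p"
    and rE: "rhoE_density rho K t E p rhoE"
  shows "regular_kernel rhoE L"
proof -
  have pr: "prob_density rho" using Lr by (rule L_regular_prob_density)
  have pp: "prob_density p" using sed unfolding self_energy_density_def by auto
  show ?thesis
  proof
    show "prob_density rhoE" using rE unfolding rhoE_density_def by auto
    show "(\<integral>\<^sup>+w. h w * ennreal (rhoE w) \<partial>lborel) \<le> ennreal L * (\<integral>\<^sup>+w. h w \<partial>lborel)"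
      if "h \<in> borel_measurable borel" for h :: "real \<Rightarrow> ennreal"
      using nn_integral_rhoE_le[OF rE pr pp L_regular_le[OF Lr] that] .
    show "\<exists>\<delta>>0. \<forall>h::real \<Rightarrow> ennreal. h \<in> borel_measurable borel \<longrightarrow> (\<forall>w. R < \<bar>w\<bar> \<longrightarrow> h w = 0) \<longrightarrow>
      ennreal \<delta> * (\<integral>\<^sup>+w. h w \<partial>lborel) \<le> (\<integral>\<^sup>+w. h w * ennreal (rhoE w) \<partial>lborel)"
      if "0 < R" for R
      using nn_integral_rhoE_ge[OF rE pr pp L_regular_locally_bounded_below[OF Lr] that] .
  qed
qed

lemma ennreal_enn2real_le: "ennreal (enn2real x) \<le> x"
  by (cases x) auto

lemma nn_integral_interval_nonzero:
  fixes f :: "real \<Rightarrow> ennreal"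
  assumes f[measurable]: "f \<in> borel_measurable borel" and nz: "(\<integral>\<^sup>+z. f z \<partial>lborel) \<noteq> 0"
  obtains R where "0 < R" "(\<integral>\<^sup>+z. f z * indicator {-R..R} z \<partial>lborel) \<noteq> 0"
proof -
  have "\<exists>n::nat. (\<integral>\<^sup>+z. f z * indicator {-(real n+1)..real n+1} z \<partial>lborel) \<noteq> 0"
  proof (rule ccontr)
    assume "\<not> ?thesis"
    then have "\<forall>n::nat. AE z in lborel. f z * indicator {-(real n+1)..real n+1} z = 0"
      by (subst (asm) nn_integral_0_iff_AE) auto
    then have "AE z in lborel. \<forall>n::nat. f z * indicator {-(real n+1)..real n+1} z = 0"
      by (simp only: AE_all_countable) simp
    then have "AE z in lborel. f z = 0"
    proof (rule AE_mp, intro AE_I2 impI)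
      fix z assume H: "\<forall>n::nat. f z * indicator {-(real n+1)..real n+1} z = 0"
      obtain n :: nat where "\<bar>z\<bar> \<le> real n" using real_arch_simple by blast
      then show "f z = 0" using H[rule_format, of n] by (auto simp: indicator_def)
    qed
    then show False using nz by (subst (asm) nn_integral_0_iff_AE) auto
  qed
  then obtain n :: nat where "(\<integral>\<^sup>+z. f z * indicator {-(real n+1)..real n+1} z \<partial>lborel) \<noteq> 0" ..
  then show ?thesis by (intro that[of "real n + 1"]) auto
qed

context regular_kernel
begin

lemma measurable_r[measurable]: "r \<in> borel_measurable borel"
  using density by (rule prob_density_measurable)

lemma r_nonneg: "0 \<le> r x"
  using density unfolding prob_density_def by auto

lemma nn_integral_r: "(\<integral>\<^sup>+w. ennreal (r w) \<partial>lborel) = 1"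
  using density unfolding prob_density_def by auto

lemma nn_integral_r_reflect: "(\<integral>\<^sup>+b. ennreal (r (c - b)) \<partial>lborel) = 1"
  using nn_integral_real_affine[of "\<lambda>w. ennreal (r w)" "-1" c] by (simp add: nn_integral_r)

text \<open>The integral in the transfer operator, before the factor and the substitution
  \<open>b = t\<^sup>2/x\<close>.\<close>
definition kernel_integral :: "(real \<Rightarrow> real) \<Rightarrow> real \<Rightarrow> ennreal" where
  "kernel_integral f b = (\<integral>\<^sup>+z. ennreal (r (-z-b) * f z) \<partial>lborel)"

lemma measurable_kernel_integral[measurable]:
  assumes [measurable]: "f \<in> borel_measurable borel"
  shows "kernel_integral f \<in> borel_measurable borel"
  unfolding kernel_integral_def[abs_def] by measurable

lemma kernel_integral_reflect:
  assumes f_meas[measurable]: "f \<in> borel_measurable borel" and f_nonneg: "\<And>y. 0 \<le> f y"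
  shows "kernel_integral f b = (\<integral>\<^sup>+w. ennreal (f (-b-w)) * ennreal (r w) \<partial>lborel)"
proof -
  have "kernel_integral f b = (\<integral>\<^sup>+w. ennreal (r (-(-b + -1*w)-b) * f (-b + -1*w)) \<partial>lborel)"
    unfolding kernel_integral_def by (subst nn_integral_real_affine[of _ "-1" "-b"]) auto
  also have "\<dots> = (\<integral>\<^sup>+w. ennreal (f (-b-w)) * ennreal (r w) \<partial>lborel)"
    using f_nonneg r_nonneg by (simp add: ennreal_mult mult.commute)
  finally show ?thesis .
qed

lemma kernel_integral_le_const:
  assumes "f \<in> borel_measurable borel" and "\<And>y. 0 \<le> f y" and "\<And>y. f y \<le> B"
  shows "kernel_integral f b \<le> ennreal B"
proof -
  have "kernel_integral f b \<le> (\<integral>\<^sup>+w. ennreal B * ennreal (r w) \<partial>lborel)"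
    unfolding kernel_integral_reflect[OF assms(1,2)]
    by (intro nn_integral_mono mult_right_mono ennreal_leI assms(3)) auto
  also have "\<dots> = ennreal B" by (simp add: nn_integral_cmult nn_integral_r)
  finally show ?thesis .
qed

lemma nn_integral_kernel_integral:
  assumes f_meas[measurable]: "f \<in> borel_measurable borel" and f_nonneg: "\<And>y. 0 \<le> f y"
  shows "(\<integral>\<^sup>+b. kernel_integral f b \<partial>lborel) = (\<integral>\<^sup>+z. ennreal (f z) \<partial>lborel)"
proof -
  have "(\<integral>\<^sup>+b. kernel_integral f b \<partial>lborel) = (\<integral>\<^sup>+z. (\<integral>\<^sup>+b. ennreal (r (-z-b) * f z) \<partial>lborel) \<partial>lborel)"
    unfolding kernel_integral_def by (rule lborel_pair.Fubini') measurable
  also have "\<dots> = (\<integral>\<^sup>+z. ennreal (f z) \<partial>lborel)"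
  proof (rule nn_integral_cong)
    fix z
    have "(\<integral>\<^sup>+b. ennreal (r (-z-b) * f z) \<partial>lborel) = (\<integral>\<^sup>+b. ennreal (r (-z-b)) \<partial>lborel) * ennreal (f z)"
      using f_nonneg r_nonneg by (simp add: ennreal_mult nn_integral_multc)
    then show "(\<integral>\<^sup>+b. ennreal (r (-z-b) * f z) \<partial>lborel) = ennreal (f z)"
      using nn_integral_r_reflect[of "-z"] by simp
  qed
  finally show ?thesis .
qed

text \<open>Away from the unit interval \<open>f\<close> is bounded, which costs a constant since \<open>r\<close> is a
  probability density; on the unit interval \<open>f\<close> is integrable, which costs a multiple of its
  integral since \<open>r\<close> is bounded.\<close>
lemma kernel_integral_finite:
  assumes f_meas[measurable]: "f \<in> borel_measurable borel" and f_nonneg: "\<And>y. 0 \<le> f y"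
    and f_le: "\<And>y. 1 \<le> \<bar>y\<bar> \<Longrightarrow> f y \<le> C"
    and f_int: "(\<integral>\<^sup>+y. ennreal (f y) * indicator {-1<..<1} y \<partial>lborel) < \<infinity>"
  shows "kernel_integral f a < \<infinity>"
proof -
  define h where "h = (\<lambda>w. ennreal (f (-a-w)) * indicator {-1<..<1} (-a-w))"
  have [measurable]: "h \<in> borel_measurable borel" unfolding h_def by measurable
  have f_split: "ennreal (f (-a-w)) \<le> ennreal C + h w" for w
  proof (cases "\<bar>-a-w\<bar> < 1")
    case True then show ?thesis unfolding h_def by (simp add: indicator_def abs_less_iff)
  next
    case False
    then have "ennreal (f (-a-w)) \<le> ennreal C" by (intro ennreal_leI f_le) auto
    then show ?thesis by (rule add_increasing2[OF zero_le])
  qed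
  have "kernel_integral f a \<le> (\<integral>\<^sup>+w. (ennreal C + h w) * ennreal (r w) \<partial>lborel)"
    unfolding kernel_integral_reflect[OF f_meas f_nonneg] by (intro nn_integral_mono mult_right_mono f_split) auto
  also have "\<dots> = ennreal C + (\<integral>\<^sup>+w. h w * ennreal (r w) \<partial>lborel)"
    by (simp add: distrib_right nn_integral_add nn_integral_cmult nn_integral_r)
  also have "\<dots> \<le> ennreal C + ennreal L * (\<integral>\<^sup>+w. h w \<partial>lborel)"
    by (intro add_left_mono nn_integral_le) measurable
  also have "(\<integral>\<^sup>+w. h w \<partial>lborel) = (\<integral>\<^sup>+y. ennreal (f y) * indicator {-1<..<1} y \<partial>lborel)"
    unfolding h_def by (subst nn_integral_real_affine[of _ "-1" "-a"]) auto
  also have "ennreal C + ennreal L * \<dots> < \<infinity>"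
    using f_int by (simp add: ennreal_mult_less_top)
  finally show ?thesis .
qed

lemma kernel_integral_ge_const:
  assumes f_meas[measurable]: "f \<in> borel_measurable borel" and f_nonneg: "\<And>y. 0 \<le> f y"
    and f_nz: "(\<integral>\<^sup>+z. ennreal (f z) \<partial>lborel) \<noteq> 0"
    and f_fin: "(\<integral>\<^sup>+z. ennreal (f z) \<partial>lborel) < \<infinity>"
  obtains d where "0 < d" "\<And>b. \<bar>b\<bar> \<le> T \<Longrightarrow> ennreal d \<le> kernel_integral f b"
proof -
  have "(\<lambda>z. ennreal (f z)) \<in> borel_measurable borel" by measurable
  then obtain R1 where R1: "0 < R1" and mu_nz: "(\<integral>\<^sup>+z. ennreal (f z) * indicator {-R1..R1} z \<partial>lborel) \<noteq> 0"
    using f_nz by (rule nn_integral_interval_nonzero)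
  define mu where "mu = (\<integral>\<^sup>+z. ennreal (f z) * indicator {-R1..R1} z \<partial>lborel)"
  define R where "R = R1 + \<bar>T\<bar>"
  have "0 < R" unfolding R_def using R1 by simp
  then obtain \<delta> where \<delta>: "0 < \<delta>" and \<delta>_le: "\<And>h::real \<Rightarrow> ennreal. h \<in> borel_measurable borel \<Longrightarrow>
     (\<forall>w. R < \<bar>w\<bar> \<longrightarrow> h w = 0) \<Longrightarrow> ennreal \<delta> * (\<integral>\<^sup>+w. h w \<partial>lborel) \<le> (\<integral>\<^sup>+w. h w * ennreal (r w) \<partial>lborel)"
    using nn_integral_ge by blast
  have mu_fin: "mu < \<infinity>"
  proof -
    have "mu \<le> (\<integral>\<^sup>+z. ennreal (f z) \<partial>lborel)" unfolding mu_def
      by (intro nn_integral_mono) (auto simp: indicator_def)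
    then show ?thesis using f_fin by (simp add: le_less_trans)
  qed
  have mu_pos: "enn2real mu > 0" using mu_nz mu_fin unfolding mu_def[symmetric]
    by (simp add: enn2real_positive_iff) (metis not_gr_zero)
  have "ennreal (\<delta> * enn2real mu) \<le> kernel_integral f b" if b: "\<bar>b\<bar> \<le> T" for b
  proof -
    define h where "h = (\<lambda>w. ennreal (f (-b-w)) * indicator {-R..R} w)"
    have [measurable]: "h \<in> borel_measurable borel" unfolding h_def by measurable
    have "ennreal (\<delta> * enn2real mu) = ennreal \<delta> * mu"
      using \<delta> mu_fin by (simp add: ennreal_mult)
    also have "mu \<le> (\<integral>\<^sup>+w. h w \<partial>lborel)"
    proof -
      have "(\<integral>\<^sup>+w. h w \<partial>lborel) = (\<integral>\<^sup>+z. ennreal (f z) * indicator {-R..R} (-b-z) \<partial>lborel)"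
        unfolding h_def by (subst nn_integral_real_affine[of _ "-1" "-b"]) auto
      moreover have "indicator {-R1..R1} z \<le> (indicator {-R..R} (-b-z) :: ennreal)" for z
        using b unfolding R_def by (auto simp: indicator_def)
      ultimately show ?thesis unfolding mu_def
        by (auto intro!: nn_integral_mono mult_left_mono)
    qed
    also have "ennreal \<delta> * (\<integral>\<^sup>+w. h w \<partial>lborel) \<le> (\<integral>\<^sup>+w. h w * ennreal (r w) \<partial>lborel)"
      by (rule \<delta>_le) (auto simp: h_def indicator_def)
    also have "\<dots> \<le> kernel_integral f b" unfolding kernel_integral_reflect[OF f_meas f_nonneg] h_def
      by (intro nn_integral_mono) (auto simp: indicator_def)
    finally show ?thesis by (simp add: mult_left_mono)
  qed
  then show ?thesis using that[of "\<delta> * enn2real mu"] \<delta> mu_pos by auto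
qed

text \<open>The mass of \<open>r\<close> on \<open>[1, 2]\<close> or \<open>[-2, -1]\<close> (chosen by the sign of \<open>a\<close>) sees \<open>f\<close>
  at distance between \<open>\<bar>a\<bar> + 1\<close> and \<open>\<bar>a\<bar> + 2\<close> from the origin.\<close>
lemma kernel_integral_ge_decay:
  assumes f_meas[measurable]: "f \<in> borel_measurable borel" and f_nonneg: "\<And>y. 0 \<le> f y"
    and "0 \<le> q" and "0 < d" and f_ge: "\<And>y. 1 \<le> \<bar>y\<bar> \<Longrightarrow> d / \<bar>y\<bar> powr q \<le> f y"
  obtains d' where "0 < d'" "\<And>a. ennreal (d' / (\<bar>a\<bar> + 2) powr q) \<le> kernel_integral f a"
proof -
  obtain \<delta> where \<delta>: "0 < \<delta>" and \<delta>_le: "\<And>h::real \<Rightarrow> ennreal. h \<in> borel_measurable borel \<Longrightarrow>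
     (\<forall>w. 2 < \<bar>w\<bar> \<longrightarrow> h w = 0) \<Longrightarrow> ennreal \<delta> * (\<integral>\<^sup>+w. h w \<partial>lborel) \<le> (\<integral>\<^sup>+w. h w * ennreal (r w) \<partial>lborel)"
    using nn_integral_ge[of 2] by auto
  have "ennreal (\<delta> * d / (\<bar>a\<bar> + 2) powr q) \<le> kernel_integral f a" for a
  proof -
    define J where "J = (if a \<le> 0 then {-2..-1::real} else {1..2})"
    define c where "c = d / (\<bar>a\<bar> + 2) powr q"
    define h where "h = (\<lambda>w. ennreal (f (-a-w)) * indicator J w)"
    have [measurable]: "h \<in> borel_measurable borel" unfolding h_def J_def by measurable
    have c_le: "ennreal c * indicator J w \<le> h w" for w
    proof (cases "w \<in> J")
      case True
      have y: "\<bar>a\<bar> + 1 \<le> \<bar>-a-w\<bar>" "\<bar>-a-w\<bar> \<le> \<bar>a\<bar> + 2" using True unfolding J_def by (auto split: if_splits)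
      have "c \<le> d / \<bar>-a-w\<bar> powr q"
        unfolding c_def using \<open>0 < d\<close> \<open>0 \<le> q\<close> y by (intro divide_left_mono powr_mono2 mult_pos_pos) auto
      also have "\<dots> \<le> f (-a-w)" using y by (intro f_ge) auto
      finally show ?thesis using True unfolding h_def by (simp add: ennreal_leI)
    qed (simp add: h_def)
    have "ennreal (\<delta> * d / (\<bar>a\<bar> + 2) powr q) = ennreal \<delta> * (\<integral>\<^sup>+w. ennreal c * indicator J w \<partial>lborel)"
      unfolding c_def J_def using \<delta> \<open>0 < d\<close> by (simp add: nn_integral_cmult_indicator ennreal_mult[symmetric])
    also have "\<dots> \<le> ennreal \<delta> * (\<integral>\<^sup>+w. h w \<partial>lborel)"
      by (intro mult_left_mono nn_integral_mono c_le) auto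
    also have "\<dots> \<le> (\<integral>\<^sup>+w. h w * ennreal (r w) \<partial>lborel)"
      by (rule \<delta>_le) (auto simp: h_def J_def indicator_def)
    also have "\<dots> \<le> kernel_integral f a" unfolding kernel_integral_reflect[OF f_meas f_nonneg] h_def
      by (intro nn_integral_mono) (auto simp: indicator_def)
    finally show ?thesis .
  qed
  then show ?thesis using that[of "\<delta> * d"] \<delta> \<open>0 < d\<close> by auto
qed

end

lemma powr_inversion_jacobian_le:
  fixes t b q :: real assumes t: "0 < t" and b: "t^2 \<le> \<bar>b\<bar>" and q: "q \<le> 2"
  shows "t powr q / \<bar>t^2/b\<bar> powr q * (t^2/b^2) \<le> t powr (q - 2)"
proof -
  have b0: "0 < \<bar>b\<bar>" using b t by (smt (verit) zero_less_power)
  have "t powr q / \<bar>t^2/b\<bar> powr q * (t^2/b^2) = t powr (2 - q) * \<bar>b\<bar> powr (q - 2)"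
    using t b0 by (simp add: abs_div powr_divide powr_diff powr_minus_divide power2_eq_square powr_mult
        field_simps flip: powr_realpow)
  also have "\<bar>b\<bar> powr (q - 2) \<le> (t^2) powr (q - 2)"
    by (rule powr_mono2') (use b q t in auto)
  also have "(t^2) powr (q - 2) = t powr (2 * (q - 2))"
    using t by (simp add: powr_powr flip: powr_numeral)
  also have "t powr (2 - q) * t powr (2 * (q - 2)) = t powr (q - 2)"
    by (simp add: powr_add[symmetric])
  finally show ?thesis using t by simp
qed

text \<open>The substitution \<open>y = -t\<^sup>2/x\<close> on \<open>x \<in> [-M, -t\<^sup>2]\<close>, followed by \<open>b = -x\<close>.\<close>
lemma nn_integral_inversion_compact_le:
  fixes \<Phi> :: "real \<Rightarrow> ennreal" and t q M :: real
  assumes \<Phi>[measurable]: "\<Phi> \<in> borel_measurable borel" and t: "0 < t" and q: "q \<le> 2" and M: "t^2 < M"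
  shows "(\<integral>\<^sup>+y. ennreal (t powr q / \<bar>y\<bar> powr q) * \<Phi> (t^2/y) * indicator {t^2/M..1} y \<partial>lborel)
     \<le> ennreal (t powr (q - 2)) * (\<integral>\<^sup>+b. \<Phi> b \<partial>lborel)"
proof -
  define f where "f = (\<lambda>y. ennreal (t powr q / \<bar>y\<bar> powr q) * \<Phi> (t^2/y))"
  have f_meas: "f \<in> borel_measurable borel" unfolding f_def by measurable
  define g where "g = (\<lambda>x::real. - (t^2) / x)"
  define g' where "g' = (\<lambda>x::real. t^2 / x^2)"
  have a: "-M < - (t^2)" using M by simp
  have neg: "x \<in> {-M..-(t^2)} \<Longrightarrow> x < 0" for x
    using t by auto (smt (verit) zero_less_power)
  have interval: "{t^2/M..1} = {g (-M) .. g (-(t^2))}"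
    unfolding g_def using t by auto
  have "(\<integral>\<^sup>+y. f y * indicator {t^2/M..1} y \<partial>lborel)
      = (\<integral>\<^sup>+x. f (g x) * ennreal (g' x) * indicator {-M..-(t^2)} x \<partial>lborel)"
    unfolding interval
  proof (rule nn_integral_substitution_aux[OF f_meas _ _ _ _ a])
    show "(g has_real_derivative g' x) (at x)" if "x \<in> {-M..- (t^2)}" for x
      unfolding g_def g'_def using neg[OF that]
      by (auto intro!: derivative_eq_intros simp: power2_eq_square field_simps)
    have "\<forall>x\<in>{-M..-(t^2)}. x^2 \<noteq> 0" by (auto dest!: neg)
    then show "continuous_on {-M..- (t^2)} g'" unfolding g'_def by (intro continuous_intros)
  qed (auto simp: g'_def)
  also have "\<dots> \<le> (\<integral>\<^sup>+x. ennreal (t powr (q - 2)) * \<Phi> (-x) \<partial>lborel)"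
  proof (intro nn_integral_mono)
    fix x
    show "f (g x) * ennreal (g' x) * indicator {-M..-(t^2)} x \<le> ennreal (t powr (q - 2)) * \<Phi> (-x)"
    proof (cases "x \<in> {-M..-(t^2)}")
      case True
      then have "x < 0" "t^2 \<le> \<bar>x\<bar>" using neg by auto
      then have "f (g x) * ennreal (g' x) = ennreal (t powr q / \<bar>t^2/x\<bar> powr q * (t^2/x^2)) * \<Phi> (-x)"
        using t unfolding f_def g_def g'_def
        by (simp add: abs_div ennreal_mult[symmetric] mult_ac)
      also have "\<dots> \<le> ennreal (t powr (q - 2)) * \<Phi> (-x)"
        using \<open>t^2 \<le> \<bar>x\<bar>\<close> by (intro mult_right_mono ennreal_leI powr_inversion_jacobian_le t q) auto
      finally show ?thesis using True by simp
    qed simp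
  qed
  also have "\<dots> = ennreal (t powr (q - 2)) * (\<integral>\<^sup>+b. \<Phi> b \<partial>lborel)"
    using nn_integral_real_affine[OF \<Phi>, of "-1" 0] by (simp add: nn_integral_cmult)
  finally show ?thesis unfolding f_def .
qed

text \<open>By monotone convergence over the intervals \<open>[t\<^sup>2/(n + t\<^sup>2 + 1), 1]\<close>, which
  exhaust \<open>(0, 1)\<close>.\<close>
lemma nn_integral_inversion_pos_le:
  fixes \<Phi> :: "real \<Rightarrow> ennreal" and t q :: real
  assumes \<Phi>[measurable]: "\<Phi> \<in> borel_measurable borel" and t: "0 < t" and q: "q \<le> 2"
  shows "(\<integral>\<^sup>+y. ennreal (t powr q / \<bar>y\<bar> powr q) * \<Phi> (t^2/y) * indicator {0<..<1} y \<partial>lborel)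
     \<le> ennreal (t powr (q - 2)) * (\<integral>\<^sup>+b. \<Phi> b \<partial>lborel)"
proof -
  define f where "f = (\<lambda>y. ennreal (t powr q / \<bar>y\<bar> powr q) * \<Phi> (t^2/y))"
  have f_meas: "f \<in> borel_measurable borel" unfolding f_def by measurable
  define A where "A = (\<lambda>n::nat. {t^2 / (real n + t^2 + 1) .. 1})"
  have pos: "0 < real m + t^2 + 1" for m :: nat
    by (smt (verit) of_nat_0_le_iff zero_le_power2)
  have A_mono: "incseq (\<lambda>n y. f y * indicator (A n) y)"
  proof (intro incseq_SucI le_funI mult_left_mono)
    fix n y
    have "t^2 / (real (Suc n) + t^2 + 1) \<le> t^2 / (real n + t^2 + 1)"
      using pos[of n] pos[of "Suc n"] by (intro divide_left_mono) (auto intro!: mult_pos_pos)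
    then show "indicator (A n) y \<le> (indicator (A (Suc n)) y :: ennreal)"
      unfolding A_def by (auto simp: indicator_def)
  qed auto
  have A_exhaust: "y \<in> (\<Union>n. A n)" if y: "y \<in> {0<..<1}" for y
  proof -
    obtain n :: nat where n: "t^2 / y \<le> real n" using real_arch_simple by blast
    have "t^2 \<le> real n * y" using n y by (simp add: pos_divide_le_eq)
    also have "\<dots> \<le> (real n + t^2 + 1) * y" using y by (intro mult_right_mono) auto
    finally have "t^2 / (real n + t^2 + 1) \<le> y"
      using pos[of n] by (simp add: pos_divide_le_eq mult.commute)
    then show ?thesis using y unfolding A_def by auto
  qed
  have "(\<integral>\<^sup>+y. f y * indicator {0<..<1} y \<partial>lborel) \<le> (\<integral>\<^sup>+y. (SUP n. f y * indicator (A n) y) \<partial>lborel)"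
  proof (intro nn_integral_mono)
    fix y
    show "f y * indicator {0<..<1} y \<le> (SUP n. f y * indicator (A n) y)"
    proof (cases "y \<in> {0<..<1}")
      case True
      then obtain n where "y \<in> A n" using A_exhaust by blast
      then show ?thesis using True by (intro SUP_upper2[of n]) auto
    qed simp
  qed
  also have "\<dots> = (SUP n. (\<integral>\<^sup>+y. f y * indicator (A n) y \<partial>lborel))"
    using f_meas by (intro nn_integral_monotone_convergence_SUP[OF A_mono]) (auto simp: A_def)
  also have "\<dots> \<le> ennreal (t powr (q - 2)) * (\<integral>\<^sup>+b. \<Phi> b \<partial>lborel)"
    unfolding A_def f_def using pos
    by (intro SUP_least nn_integral_inversion_compact_le \<Phi> t q) (smt (verit) of_nat_0_le_iff)
  finally show ?thesis unfolding f_def .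
qed

lemma nn_integral_inversion_le:
  fixes \<Phi> :: "real \<Rightarrow> ennreal" and t q :: real
  assumes \<Phi>[measurable]: "\<Phi> \<in> borel_measurable borel" and t: "0 < t" and q: "q \<le> 2"
  shows "(\<integral>\<^sup>+y. ennreal (t powr q / \<bar>y\<bar> powr q) * \<Phi> (t^2/y) * indicator {-1<..<1} y \<partial>lborel)
     \<le> 2 * ennreal (t powr (q - 2)) * (\<integral>\<^sup>+b. \<Phi> b \<partial>lborel)"
proof -
  let ?k = "\<lambda>y. ennreal (t powr q / \<bar>y\<bar> powr q)"
  have split: "?k y * \<Phi> (t^2/y) * indicator {-1<..<1} y
      = ?k y * \<Phi> (t^2/y) * indicator {0<..<1} y + ?k (-y) * \<Phi> (-(t^2/(-y))) * indicator {0<..<1} (-y)" for y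
    by (cases "y = 0") (auto simp: indicator_def)
  have "(\<integral>\<^sup>+y. ?k y * \<Phi> (t^2/y) * indicator {-1<..<1} y \<partial>lborel)
      = (\<integral>\<^sup>+y. ?k y * \<Phi> (t^2/y) * indicator {0<..<1} y \<partial>lborel)
        + (\<integral>\<^sup>+y. ?k (-y) * \<Phi> (-(t^2/(-y))) * indicator {0<..<1} (-y) \<partial>lborel)"
    unfolding split by (rule nn_integral_add) auto
  also have "(\<integral>\<^sup>+y. ?k (-y) * \<Phi> (-(t^2/(-y))) * indicator {0<..<1} (-y) \<partial>lborel)
      = (\<integral>\<^sup>+y. ?k y * \<Phi> (-(t^2/y)) * indicator {0<..<1} y \<partial>lborel)"
    using nn_integral_real_affine[of "\<lambda>y. ?k y * \<Phi> (-(t^2/y)) * indicator {0<..<1} y" "-1" 0] by simp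
  also have "\<dots> \<le> ennreal (t powr (q - 2)) * (\<integral>\<^sup>+b. \<Phi> (-b) \<partial>lborel)"
    by (rule nn_integral_inversion_pos_le) (use t q in auto)
  also have "(\<integral>\<^sup>+b. \<Phi> (-b) \<partial>lborel) = (\<integral>\<^sup>+b. \<Phi> b \<partial>lborel)"
    using nn_integral_real_affine[OF \<Phi>, of "-1" 0] by simp
  also have "(\<integral>\<^sup>+y. ?k y * \<Phi> (t^2/y) * indicator {0<..<1} y \<partial>lborel)
      \<le> ennreal (t powr (q - 2)) * (\<integral>\<^sup>+b. \<Phi> b \<partial>lborel)"
    by (rule nn_integral_inversion_pos_le[OF \<Phi> t q])
  finally show ?thesis by (simp add: add_right_mono mult_2 distrib_right)
qed

lemma one_plus_powr_le:
  fixes z q :: real assumes z: "0 \<le> z" and q: "0 < q"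
  shows "(1 + z) powr q \<le> 2 powr q * (1 + z powr q)"
proof (cases "z \<le> 1")
  case True
  have "(1 + z) powr q \<le> 2 powr q" using True z q by (intro powr_mono2) auto
  also have "\<dots> \<le> 2 powr q * (1 + z powr q)" by (simp add: mult_le_cancel_left1)
  finally show ?thesis .
next
  case False
  have "(1 + z) powr q \<le> (2 * z) powr q" using False z q by (intro powr_mono2) auto
  also have "\<dots> = 2 powr q * z powr q" using z by (simp add: powr_mult)
  also have "\<dots> \<le> 2 powr q * (1 + z powr q)" by (intro mult_left_mono) auto
  finally show ?thesis .
qed

lemma add_abs_powr_le:
  fixes a x q :: real assumes a: "0 \<le> a" and q: "0 < q"
  shows "(a + 2 * \<bar>x\<bar>) powr q \<le> (2 * max a 2) powr q * (1 + \<bar>x\<bar> powr q)"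
proof -
  define D where "D = max a 2"
  have D: "0 < D" "a \<le> D" "2 \<le> D" unfolding D_def by auto
  have "2 * \<bar>x\<bar> \<le> D * \<bar>x\<bar>" using D by (intro mult_right_mono) auto
  then have "(a + 2 * \<bar>x\<bar>) powr q \<le> (D * (1 + \<bar>x\<bar>)) powr q"
    using a q D by (intro powr_mono2) (auto simp: algebra_simps)
  also have "\<dots> = D powr q * (1 + \<bar>x\<bar>) powr q" using D by (simp add: powr_mult)
  also have "\<dots> \<le> D powr q * (2 powr q * (1 + \<bar>x\<bar> powr q))"
    by (intro mult_left_mono one_plus_powr_le q) auto
  finally show ?thesis using D by (simp add: D_def powr_mult mult_ac)
qed

lemma in_X_bounded:
  assumes "in_X s f" obtains B where "\<And>x. \<bar>f x\<bar> \<le> B"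
proof -
  obtain B where B: "\<And>x. \<bar>f x\<bar> * (1 + \<bar>x\<bar> powr (2 - s)) \<le> B"
    using assms unfolding in_X_def bdd_above_def by auto
  have "\<bar>f x\<bar> \<le> \<bar>f x\<bar> * (1 + \<bar>x\<bar> powr (2 - s))" for x by (simp add: mult_le_cancel_left1)
  then show ?thesis using B that by (meson order_trans)
qed

locale transfer_kernel = regular_kernel +
  fixes s t :: real
  assumes s_nonneg: "0 \<le> s" and s_less_2: "s < 2" and t_pos: "0 < t"
begin

lemma transfer_eq_kernel_integral:
  assumes [measurable]: "f \<in> borel_measurable borel" and f_nonneg: "\<And>y. 0 \<le> f y"
  shows "transfer t s r f y = t powr (2-s) / \<bar>y\<bar> powr (2-s) * enn2real (kernel_integral f (t^2/y))"
proof -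
  have "(\<integral>z. r (- z - t^2/y) * f z \<partial>lborel) = enn2real (kernel_integral f (t^2/y))"
    unfolding kernel_integral_def by (rule integral_eq_nn_integral) (auto simp: r_nonneg f_nonneg)
  then show ?thesis unfolding transfer_def by simp
qed

lemma transfer_nonneg:
  assumes "f \<in> borel_measurable borel" and "\<And>y. 0 \<le> f y"
  shows "0 \<le> transfer t s r f y"
  unfolding transfer_eq_kernel_integral[OF assms] by simp

lemma measurable_transfer:
  assumes [measurable]: "f \<in> borel_measurable borel" and f_nonneg: "\<And>y. 0 \<le> f y"
  shows "transfer t s r f \<in> borel_measurable borel"
  unfolding transfer_eq_kernel_integral[OF assms, abs_def] by measurable

lemma ennreal_transfer_le:
  assumes "f \<in> borel_measurable borel" and "\<And>y. 0 \<le> f y"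
  shows "ennreal (transfer t s r f y) \<le> ennreal (t powr (2-s) / \<bar>y\<bar> powr (2-s)) * kernel_integral f (t^2/y)"
proof -
  have "ennreal (transfer t s r f y)
      = ennreal (t powr (2-s) / \<bar>y\<bar> powr (2-s)) * ennreal (enn2real (kernel_integral f (t^2/y)))"
    unfolding transfer_eq_kernel_integral[OF assms] by (rule ennreal_mult) auto
  also have "\<dots> \<le> ennreal (t powr (2-s) / \<bar>y\<bar> powr (2-s)) * kernel_integral f (t^2/y)"
    by (intro mult_left_mono ennreal_enn2real_le) auto
  finally show ?thesis .
qed

lemma nn_integral_transfer_unit_interval_finite:
  assumes f_meas[measurable]: "f \<in> borel_measurable borel" and f_nonneg: "\<And>y. 0 \<le> f y"
    and f_fin: "(\<integral>\<^sup>+z. ennreal (f z) \<partial>lborel) < \<infinity>"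
  shows "(\<integral>\<^sup>+y. ennreal (transfer t s r f y) * indicator {-1<..<1} y \<partial>lborel) < \<infinity>"
proof -
  have "(\<integral>\<^sup>+y. ennreal (transfer t s r f y) * indicator {-1<..<1} y \<partial>lborel)
      \<le> (\<integral>\<^sup>+y. ennreal (t powr (2-s) / \<bar>y\<bar> powr (2-s)) * kernel_integral f (t^2/y)
            * indicator {-1<..<1} y \<partial>lborel)"
    by (intro nn_integral_mono mult_right_mono ennreal_transfer_le[OF f_meas f_nonneg]) auto
  also have "\<dots> \<le> 2 * ennreal (t powr (2 - s - 2)) * (\<integral>\<^sup>+b. kernel_integral f b \<partial>lborel)"
    using s_nonneg by (intro nn_integral_inversion_le t_pos) auto
  also have "\<dots> < \<infinity>"
    using f_fin by (simp add: nn_integral_kernel_integral[OF f_meas f_nonneg] ennreal_mult_less_top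
        ennreal_mult[symmetric])
  finally show ?thesis .
qed

lemma transfer_le_outside_unit:
  assumes f_meas: "f \<in> borel_measurable borel" and f_nonneg: "\<And>y. 0 \<le> f y"
    and f_le: "\<And>y. f y \<le> B" and y: "1 \<le> \<bar>y\<bar>"
  shows "transfer t s r f y \<le> t powr (2-s) * B"
proof -
  have "1 \<le> \<bar>y\<bar> powr (2-s)" using y s_less_2 by (simp add: ge_one_powr_ge_zero)
  then have "t powr (2-s) / \<bar>y\<bar> powr (2-s) \<le> t powr (2-s)"
    by (simp add: divide_le_eq mult_le_cancel_left1)
  moreover have "enn2real (kernel_integral f (t^2/y)) \<le> B"
    using enn2real_mono[OF kernel_integral_le_const[OF f_meas f_nonneg f_le]] f_nonneg[of 0] f_le[of 0]
    by simp
  ultimately show ?thesis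
    unfolding transfer_eq_kernel_integral[OF f_meas f_nonneg] by (intro mult_mono) auto
qed

lemma transfer_ge_outside_unit:
  assumes f_meas[measurable]: "f \<in> borel_measurable borel" and f_nonneg: "\<And>y. 0 \<le> f y"
    and f_le: "\<And>y. f y \<le> B"
    and f_nz: "(\<integral>\<^sup>+z. ennreal (f z) \<partial>lborel) \<noteq> 0"
    and f_fin: "(\<integral>\<^sup>+z. ennreal (f z) \<partial>lborel) < \<infinity>"
  obtains d where "0 < d" "\<And>y. 1 \<le> \<bar>y\<bar> \<Longrightarrow> d / \<bar>y\<bar> powr (2-s) \<le> transfer t s r f y"
proof -
  obtain d where d: "0 < d" and d_le: "\<And>b. \<bar>b\<bar> \<le> t^2 \<Longrightarrow> ennreal d \<le> kernel_integral f b"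
    using kernel_integral_ge_const[OF f_meas f_nonneg f_nz f_fin] by blast
  have "t powr (2-s) * d / \<bar>y\<bar> powr (2-s) \<le> transfer t s r f y" if y: "1 \<le> \<bar>y\<bar>" for y
  proof -
    have "t^2 / \<bar>y\<bar> \<le> t^2" using y by (simp add: divide_le_eq mult_le_cancel_left1)
    then have "ennreal d \<le> kernel_integral f (t^2/y)" by (intro d_le) (simp add: abs_div)
    then have "d \<le> enn2real (kernel_integral f (t^2/y))"
      using d kernel_integral_le_const[OF f_meas f_nonneg f_le, of "t^2/y"]
      by (metis enn2real_ennreal enn2real_mono ennreal_less_top le_less_trans less_imp_le)
    then have "t powr (2-s) * d / \<bar>y\<bar> powr (2-s)
        \<le> t powr (2-s) * enn2real (kernel_integral f (t^2/y)) / \<bar>y\<bar> powr (2-s)"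
      by (intro divide_right_mono mult_left_mono) auto
    then show ?thesis unfolding transfer_eq_kernel_integral[OF f_meas f_nonneg] by simp
  qed
  then show ?thesis using that[of "t powr (2-s) * d"] d t_pos by auto
qed

text \<open>With \<open>a = t\<^sup>2/x\<close> the decay \<open>(\<bar>a\<bar> + 2)\<^sup>-\<^sup>q\<close> of the kernel integral and the prefactor
  \<open>\<bar>x\<bar>\<^sup>-\<^sup>q\<close> combine to \<open>(t\<^sup>2 + 2\<bar>x\<bar>)\<^sup>-\<^sup>q\<close>, which is bounded at \<open>x = 0\<close>.\<close>
lemma transfer_ge_of_kernel_decay:
  assumes f_meas: "f \<in> borel_measurable borel" and f_nonneg: "\<And>y. 0 \<le> f y" and d: "0 < d"
    and decay: "\<And>a. ennreal (d / (\<bar>a\<bar> + 2) powr (2-s)) \<le> kernel_integral f a"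
    and fin: "\<And>a. kernel_integral f a < \<infinity>"
  shows "\<exists>c>0. \<forall>x. x \<noteq> 0 \<longrightarrow> c / (1 + \<bar>x\<bar> powr (2 - s)) \<le> transfer t s r f x"
proof -
  define q where "q = 2 - s"
  have q: "0 < q" unfolding q_def using s_less_2 by simp
  define M where "M = (2 * max (t^2) 2) powr q"
  have M: "0 < M" unfolding M_def by simp
  define c where "c = t powr q * d / M"
  have "c / (1 + \<bar>x\<bar> powr q) \<le> transfer t s r f x" if x: "x \<noteq> 0" for x
  proof -
    define a where "a = t^2/x"
    have xa: "\<bar>x\<bar> * (\<bar>a\<bar> + 2) = t^2 + 2 * \<bar>x\<bar>" unfolding a_def using x by (simp add: abs_div field_simps)
    have "0 < t^2 + 2 * \<bar>x\<bar>" using t_pos by (intro add_pos_nonneg) auto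
    then have pos: "0 < (t^2 + 2 * \<bar>x\<bar>) powr q" by simp
    have "d / (\<bar>a\<bar> + 2) powr q \<le> enn2real (kernel_integral f a)"
      using enn2real_mono[OF decay[of a] fin[of a, unfolded infinity_ennreal_def]] d by (simp add: q_def)
    then have "t powr q / \<bar>x\<bar> powr q * (d / (\<bar>a\<bar> + 2) powr q)
        \<le> t powr q / \<bar>x\<bar> powr q * enn2real (kernel_integral f a)"
      by (intro mult_left_mono) auto
    also have "\<dots> = transfer t s r f x"
      unfolding transfer_eq_kernel_integral[OF f_meas f_nonneg] a_def q_def ..
    finally have "t powr q / \<bar>x\<bar> powr q * (d / (\<bar>a\<bar> + 2) powr q) \<le> transfer t s r f x" .
    moreover have "t powr q / \<bar>x\<bar> powr q * (d / (\<bar>a\<bar> + 2) powr q) = t powr q * d / (t^2 + 2 * \<bar>x\<bar>) powr q"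
      by (simp flip: xa powr_mult)
    moreover have "c / (1 + \<bar>x\<bar> powr q) \<le> t powr q * d / (t^2 + 2 * \<bar>x\<bar>) powr q"
      unfolding c_def using add_abs_powr_le[of "t^2" q x] q M pos d t_pos
      by (simp add: M_def divide_le_eq le_divide_eq mult_left_mono mult_ac add_pos_nonneg)
    ultimately show ?thesis by linarith
  qed
  moreover have "0 < c" unfolding c_def using M d t_pos by simp
  ultimately show ?thesis unfolding q_def by blast
qed

theorem transfer_transfer_ge:
  assumes u_X: "in_X s u" and u_nonneg: "\<forall>x. 0 \<le> u x" and u_int_pos: "(\<integral>x. u x \<partial>lborel) > 0"
  shows "\<exists>c>0. \<forall>x. x \<noteq> 0 \<longrightarrow> c / (1 + \<bar>x\<bar> powr (2 - s)) \<le> transfer t s r (transfer t s r u) x"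
proof -
  obtain B where u_le: "\<And>x. u x \<le> B" using in_X_bounded[OF u_X] by (meson abs_le_D1)
  have u_int: "integrable lborel u" using u_int_pos not_integrable_integral_eq by fastforce
  then have u_meas[measurable]: "u \<in> borel_measurable borel" by auto
  have u_nn_int: "(\<integral>\<^sup>+x. ennreal (u x) \<partial>lborel) = ennreal (\<integral>x. u x \<partial>lborel)"
    using nn_integral_eq_integral[OF u_int] u_nonneg by simp
  define g where "g = transfer t s r u"
  have g_meas: "g \<in> borel_measurable borel" and g_nonneg: "\<And>y. 0 \<le> g y"
    unfolding g_def using u_nonneg by (auto intro: measurable_transfer transfer_nonneg)
  obtain d1 where "0 < d1" and g_ge: "\<And>y. 1 \<le> \<bar>y\<bar> \<Longrightarrow> d1 / \<bar>y\<bar> powr (2-s) \<le> g y"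
    using transfer_ge_outside_unit[OF u_meas _ u_le] u_nonneg u_nn_int u_int_pos unfolding g_def by auto
  obtain d2 where "0 < d2" and decay: "\<And>a. ennreal (d2 / (\<bar>a\<bar> + 2) powr (2-s)) \<le> kernel_integral g a"
    using kernel_integral_ge_decay[OF g_meas g_nonneg _ \<open>0 < d1\<close> g_ge] s_less_2 by auto
  have "kernel_integral g a < \<infinity>" for a
    using kernel_integral_finite[OF g_meas g_nonneg, of "t powr (2-s) * B"]
      transfer_le_outside_unit[OF u_meas _ u_le] nn_integral_transfer_unit_interval_finite[OF u_meas]
      u_nonneg u_nn_int unfolding g_def by auto
  then show ?thesis
    using transfer_ge_of_kernel_decay[OF g_meas g_nonneg \<open>0 < d2\<close> decay] unfolding g_def by blast
qed

end

theorem lemma5p6: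
  fixes L s t E :: real and K :: nat and rho p rhoE u :: "real \<Rightarrow> real"
  assumes "L_regular L rho"
    and "0 < s" and "s < 1" and "0 < t" and "1 < K"
    and "self_energy_density rho K t E p"
    and "rhoE_density rho K t E p rhoE"
    and "in_X s u" and "\<forall>x. 0 \<le> u x" and "(\<integral> x. u x \<partial>lborel) > 0"
  shows "\<exists>c>0. \<forall>x. x \<noteq> 0 \<longrightarrow>
           c / (1 + \<bar>x\<bar> powr (2 - s)) \<le> transfer t s rhoE (transfer t s rhoE u) x"
proof -
  interpret transfer_kernel rhoE L s t
    using regular_kernel_rhoE[OF assms(1,6,7)] assms(2-4)
    by (simp add: transfer_kernel_def transfer_kernel_axioms_def)
  show ?thesis using transfer_transfer_ge assms(8-10) by blast
qed

end
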